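(* Let $N\in\mathbb N$, let $\{\pi_n\in\Pi\}_{n=1}^N$ be policies chosen by a learner in the online protocol described in the context, and let $\{w_n>0\}_{n=1}^N$ be weights, $w_{1:N}=\sum_{n=1}^N w_n$. Then $$\mathbb E\Big[\sum_{n=1}^{N}\frac{w_n J(\pi_n)}{w_{1:N}}\Big]\le J(\pi^* )+C_{\pi^*}\Big(\epsilon_\Pi^w+\mathbb E\Big[\frac{\mathrm{regret}^w(\Pi)}{w_{1:N}}\Big]\Big),$$ where $\mathrm{regret}^w(\Pi)=\max_{\pi\in\Pi}\sum_{n=1}^N\big(w_n\tilde f_n(\pi_n)-w_n\tilde f_n(\pi)\big)$ and the expectation is over the sampling of the $\tilde f_n$.
   Context: Imitation learning setting. $\Pi$ is a compact convex subset of a normed space with norm $\|\cdot\|$ (dual norm $\|\cdot\|_*$); its elements are (parameters of) policies. Each policy $\pi$ has an expected cost $J(\pi)\in\mathbb R$ and induces a distribution $d_\pi$ over state–time pairs $(s,t)$; $\pi_s$ is the action distribution of $\pi$ at state $s$. There is a fixed expert policy $\pi^*$, a nonnegative function $D(\pi^*_s\|\pi_s)$ and a constant $C_{\pi^*}\ge 0$ such that $J(\pi)-J(\pi^* )\le C_{\pi^*}\,\mathbb E_{(s,t)\sim d_\pi}[D(\pi^*_s\|\pi_s)]$ for all $\pi\in\Pi$. Define $F(\pi',\pi)=\mathbb E_{(s,t)\sim d_{\pi'}}[D(\pi^*_s\|\pi_s)]$. Online protocol: in round $n$ the learner picks $\pi_n$ based only on information from rounds $1,\dots,n-1$; then the per-round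 cost $f_n(\pi)=F(\pi_n,\pi)$ is defined and a random function $\tilde f_n$ is sampled which is an unbiased estimate of $f_n$ given $\pi_n$ (i.e. $\mathbb E[\tilde f_n(\pi)\mid \text{past},\pi_n]=f_n(\pi)$ for all $\pi$). The constant $\epsilon_\Pi^w$ is such that for all $N\in\mathbb N$ and all weights $\{\theta_n>0\}_{n=1}^N$ with $\sum_n\theta_n=1$: $\mathbb E\big[\max_{\{\pi_n\in\Pi\}}\min_{\pi\in\Pi}\sum_{n=1}^N\theta_n\tilde f_n(\pi)\big]\le\epsilon_\Pi^w$. *)

theory Defs
  imports "HOL-Probability.Probability"
begin

definition Fcost ::
  "('p \<Rightarrow> ('s \<times> nat) measure) \<Rightarrow> ('p \<Rightarrow> 's \<Rightarrow> 'a pmf) \<Rightarrow> ('a pmf \<Rightarrow> 'a pmf \<Rightarrow> real)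
    \<Rightarrow> 'p \<Rightarrow> 'p \<Rightarrow> 'p \<Rightarrow> real" where
  "Fcost d act Div pstar p' p = (\<integral>st. Div (act pstar (fst st)) (act p (fst st)) \<partial>(d p'))"

text \<open>The minimum / maximum of g over S exists (as presupposed by the paper's min / max).\<close>
definition attains_min :: "'b set \<Rightarrow> ('b \<Rightarrow> real) \<Rightarrow> bool" where
  "attains_min S g \<longleftrightarrow> (\<exists>x\<in>S. \<forall>y\<in>S. g x \<le> g y)"

definition attains_max :: "'b set \<Rightarrow> ('b \<Rightarrow> real) \<Rightarrow> bool" where
  "attains_max S g \<longleftrightarrow> (\<exists>x\<in>S. \<forall>y\<in>S. g y \<le> g x)"

definition regret_w :: "(nat \<Rightarrow> real) \<Rightarrow> nat \<Rightarrow> 'p set \<Rightarrow> (nat \<Rightarrow> 'p \<Rightarrow> real) \<Rightarrow> (nat \<Rightarrow> 'p) \<Rightarrow> real" where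
  "regret_w w N Pol fs ps = (SUP p\<in>Pol. (\<Sum>n=1..N. w n * fs n (ps n) - w n * fs n p))"

end

theory Submission
  imports Defs
begin

text \<open>Put \<open>\<theta>\<^sub>n = w\<^sub>n / w\<^sub>1\<^sub>:\<^sub>N\<close>. Pointwise, the performance-difference bound gives
  \<open>\<Sum>\<^sub>n \<theta>\<^sub>n J(\<pi>\<^sub>n) \<le> J(\<pi>\<^sup>*) + C \<Sum>\<^sub>n \<theta>\<^sub>n f\<^sub>n(\<pi>\<^sub>n)\<close>. Since \<open>\<pi>\<^sub>n\<close> is chosen before round \<open>n\<close>,
  unbiasedness lets us replace \<open>f\<^sub>n(\<pi>\<^sub>n)\<close> by its sample in expectation. The sampled
  \<open>\<Sum>\<^sub>n \<theta>\<^sub>n f\<^sub>n(\<pi>\<^sub>n)\<close> is the normalised regret plus \<open>min\<^sub>\<pi> \<Sum>\<^sub>n \<theta>\<^sub>n f\<^sub>n(\<pi>)\<close>, and this minimum is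
  at most the max-min value whose expectation is bounded by \<open>\<epsilon>\<close>.\<close>

lemma convex_combination_le_add:
  fixes \<theta> x y :: "'i \<Rightarrow> real"
  assumes "finite I" "\<And>i. i \<in> I \<Longrightarrow> \<theta> i \<ge> 0" "sum \<theta> I = 1"
    and "\<And>i. i \<in> I \<Longrightarrow> x i \<le> c + y i"
  shows "(\<Sum>i\<in>I. \<theta> i * x i) \<le> c + (\<Sum>i\<in>I. \<theta> i * y i)"
proof -
  have "(\<Sum>i\<in>I. \<theta> i * x i) \<le> (\<Sum>i\<in>I. \<theta> i * c + \<theta> i * y i)"
    using assms(2,4) by (intro sum_mono) (simp add: mult_left_mono flip: distrib_left)
  also have "\<dots> = c + (\<Sum>i\<in>I. \<theta> i * y i)"
    using assms(3) by (simp add: sum.distrib flip: sum_distrib_right)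
  finally show ?thesis .
qed

lemma attains_min_obtain_INF:
  assumes "attains_min S g"
  obtains x where "x \<in> S" "\<And>y. y \<in> S \<Longrightarrow> g x \<le> g y" "g x = (INF y\<in>S. g y)"
proof -
  from assms obtain x where x: "x \<in> S" "\<And>y. y \<in> S \<Longrightarrow> g x \<le> g y"
    unfolding attains_min_def by blast
  then have "g x = (INF y\<in>S. g y)"
    by (intro antisym cINF_greatest cINF_lower bdd_belowI2) auto
  with x that show thesis by blast
qed

lemma attains_max_SUP_upper:
  assumes "attains_max S g" "x \<in> S"
  shows "g x \<le> (SUP y\<in>S. g y)"
proof -
  from assms(1) obtain z where "z \<in> S" "\<And>y. y \<in> S \<Longrightarrow> g y \<le> g z"
    unfolding attains_max_def by blast
  then show ?thesis
    using assms(2) by (intro cSUP_upper bdd_aboveI2) auto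
qed

lemma regret_w_ge_minimizer:
  assumes "q \<in> Pol" "\<And>q'. q' \<in> Pol \<Longrightarrow> (\<Sum>n=1..N. w n * fs n q) \<le> (\<Sum>n=1..N. w n * fs n q')"
  shows "(\<Sum>n=1..N. w n * fs n (ps n)) - (\<Sum>n=1..N. w n * fs n q) \<le> regret_w w N Pol fs ps"
proof -
  have diff: "(\<Sum>n=1..N. w n * fs n (ps n) - w n * fs n q') =
      (\<Sum>n=1..N. w n * fs n (ps n)) - (\<Sum>n=1..N. w n * fs n q')" for q'
    by (rule sum_subtractf)
  show ?thesis
    unfolding regret_w_def diff
    using assms
    by (intro cSUP_upper2[of _ _ q]
        bdd_aboveI2[where M = "(\<Sum>n=1..N. w n * fs n (ps n)) - (\<Sum>n=1..N. w n * fs n q)"]) auto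
qed

lemma weighted_loss_le_regret_plus_maxmin:
  fixes f :: "nat \<Rightarrow> 'p \<Rightarrow> 'p \<Rightarrow> real" and W :: real
  assumes "W > 0" and ps: "\<And>n. n \<in> {1..N} \<Longrightarrow> ps n \<in> Pol"
    and min: "\<forall>p\<in>{1..N} \<rightarrow>\<^sub>E Pol. attains_min Pol (\<lambda>q. \<Sum>n=1..N. w n / W * f n (p n) q)"
    and max: "attains_max ({1..N} \<rightarrow>\<^sub>E Pol) (\<lambda>p. INF q\<in>Pol. \<Sum>n=1..N. w n / W * f n (p n) q)"
  shows "(\<Sum>n=1..N. w n / W * f n (ps n) (ps n))
    \<le> regret_w w N Pol (\<lambda>n. f n (ps n)) ps / W
      + (SUP p\<in>{1..N} \<rightarrow>\<^sub>E Pol. INF q\<in>Pol. \<Sum>n=1..N. w n / W * f n (p n) q)"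
proof -
  define p where "p = restrict ps {1..N}"
  have p: "p \<in> {1..N} \<rightarrow>\<^sub>E Pol"
    using ps unfolding p_def by auto
  define g where "g q = (\<Sum>n=1..N. w n * f n (ps n) q)" for q
  have g_p: "(\<Sum>n=1..N. w n / W * f n (p n) q) = g q / W" for q
    unfolding g_def p_def sum_divide_distrib by (intro sum.cong) auto
  have "attains_min Pol (\<lambda>q. \<Sum>n=1..N. w n / W * f n (p n) q)"
    using min p by blast
  then have "attains_min Pol (\<lambda>q. g q / W)"
    unfolding g_p .
  then obtain q where q: "q \<in> Pol" "\<And>q'. q' \<in> Pol \<Longrightarrow> g q / W \<le> g q' / W"
    and q_INF: "g q / W = (INF q'\<in>Pol. g q' / W)"
    by (rule attains_min_obtain_INF) blast
  have "g q \<le> g q'" if "q' \<in> Pol" for q'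
    using q(2)[OF that] \<open>W > 0\<close> by (simp add: divide_le_cancel)
  then have "(\<Sum>n=1..N. w n * f n (ps n) (ps n)) - g q \<le> regret_w w N Pol (\<lambda>n. f n (ps n)) ps"
    unfolding g_def by (rule regret_w_ge_minimizer[OF q(1)])
  then have "(\<Sum>n=1..N. w n * f n (ps n) (ps n)) / W \<le> (regret_w w N Pol (\<lambda>n. f n (ps n)) ps + g q) / W"
    using \<open>W > 0\<close> by (intro divide_right_mono) auto
  then have "(\<Sum>n=1..N. w n / W * f n (ps n) (ps n)) \<le> regret_w w N Pol (\<lambda>n. f n (ps n)) ps / W + g q / W"
    by (simp add: sum_divide_distrib add_divide_distrib)
  also have "g q / W \<le> (SUP p\<in>{1..N} \<rightarrow>\<^sub>E Pol. INF q\<in>Pol. \<Sum>n=1..N. w n / W * f n (p n) q)"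
    using attains_max_SUP_upper[OF max p] unfolding q_INF g_p .
  finally show ?thesis by simp
qed

theorem lemma1:
  fixes M :: "'w measure" and G :: "nat \<Rightarrow> 'w measure"
    and Pol :: "'p::real_normed_vector set"
    and J :: "'p \<Rightarrow> real" and pstar :: 'p and C :: real
    and d :: "'p \<Rightarrow> ('s \<times> nat) measure" and act :: "'p \<Rightarrow> 's \<Rightarrow> 'a pmf"
    and Div :: "'a pmf \<Rightarrow> 'a pmf \<Rightarrow> real"
    and pis :: "nat \<Rightarrow> 'w \<Rightarrow> 'p"
    and ft :: "nat \<Rightarrow> 'w \<Rightarrow> 'p \<Rightarrow> 'p \<Rightarrow> real"
    and eps :: real and N :: nat and w :: "nat \<Rightarrow> real"
  assumes prob: "prob_space M"
    and filt_sub: "\<And>n. subalgebra M (G n)"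
    and filt_mono: "\<And>n. sets (G n) \<subseteq> sets (G (Suc n))"
    and Pi_compact: "compact Pol" and Pi_convex: "convex Pol"
    and d_prob: "\<And>p. p \<in> Pol \<Longrightarrow> prob_space (d p)"
    and D_nonneg: "\<And>x y. Div x y \<ge> 0"
    and D_int: "\<And>p q. p \<in> Pol \<Longrightarrow> q \<in> Pol \<Longrightarrow>
         integrable (d p) (\<lambda>st. Div (act pstar (fst st)) (act q (fst st)))"
    and C_nonneg: "C \<ge> 0"
    and perf: "\<And>p. p \<in> Pol \<Longrightarrow> J p - J pstar \<le> C * Fcost d act Div pstar p p"
    and pis_Pi: "\<And>n \<omega>. n \<ge> 1 \<Longrightarrow> \<omega> \<in> space M \<Longrightarrow> pis n \<omega> \<in> Pol"
    and pis_meas: "\<And>n. n \<ge> 1 \<Longrightarrow> pis n \<in> borel_measurable (G (n - 1))"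
    and ft_meas: "\<And>n p q. n \<ge> 1 \<Longrightarrow> p \<in> Pol \<Longrightarrow> q \<in> Pol \<Longrightarrow>
         (\<lambda>\<omega>. ft n \<omega> p q) \<in> borel_measurable (G n)"
    and unbiased: "\<And>n \<sigma> A. n \<ge> 1 \<Longrightarrow> \<sigma> \<in> borel_measurable (G (n - 1)) \<Longrightarrow>
         (\<forall>\<omega>\<in>space M. \<sigma> \<omega> \<in> Pol) \<Longrightarrow> A \<in> sets (G (n - 1)) \<Longrightarrow>
         integrable M (\<lambda>\<omega>. ft n \<omega> (pis n \<omega>) (\<sigma> \<omega>)) \<and>
         integrable M (\<lambda>\<omega>. Fcost d act Div pstar (pis n \<omega>) (\<sigma> \<omega>)) \<and>
         (\<integral>\<omega>. indicator A \<omega> * ft n \<omega> (pis n \<omega>) (\<sigma> \<omega>) \<partial>M)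
           = (\<integral>\<omega>. indicator A \<omega> * Fcost d act Div pstar (pis n \<omega>) (\<sigma> \<omega>) \<partial>M)"
    and eps_bound: "\<And>N' \<theta>. (\<forall>n\<in>{1..N'}. \<theta> n > 0) \<Longrightarrow> (\<Sum>n=1..N'. \<theta> n) = 1 \<Longrightarrow>
         (\<forall>\<omega>\<in>space M. \<forall>p\<in>{1..N'} \<rightarrow>\<^sub>E Pol.
            attains_min Pol (\<lambda>q. \<Sum>n=1..N'. \<theta> n * ft n \<omega> (p n) q)) \<and>
         (\<forall>\<omega>\<in>space M. attains_max ({1..N'} \<rightarrow>\<^sub>E Pol)
            (\<lambda>p. INF q\<in>Pol. \<Sum>n=1..N'. \<theta> n * ft n \<omega> (p n) q)) \<and>
         integrable M (\<lambda>\<omega>. SUP p\<in>{1..N'} \<rightarrow>\<^sub>E Pol. INF q\<in>Pol. \<Sum>n=1..N'. \<theta> n * ft n \<omega> (p n) q) \<and>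
         (\<integral>\<omega>. (SUP p\<in>{1..N'} \<rightarrow>\<^sub>E Pol. INF q\<in>Pol. \<Sum>n=1..N'. \<theta> n * ft n \<omega> (p n) q) \<partial>M) \<le> eps"
    and N_pos: "N \<ge> 1"
    and w_pos: "\<And>n. n \<in> {1..N} \<Longrightarrow> w n > 0"
    and J_int: "\<And>n. n \<in> {1..N} \<Longrightarrow> integrable M (\<lambda>\<omega>. J (pis n \<omega>))"
    and regret_int: "integrable M (\<lambda>\<omega>. regret_w w N Pol (\<lambda>n. ft n \<omega> (pis n \<omega>)) (\<lambda>n. pis n \<omega>))"
  shows "(\<integral>\<omega>. (\<Sum>n=1..N. w n * J (pis n \<omega>) / (\<Sum>k=1..N. w k)) \<partial>M)
    \<le> J pstar + C * (eps + (\<integral>\<omega>. regret_w w N Pol (\<lambda>n. ft n \<omega> (pis n \<omega>)) (\<lambda>n. pis n \<omega>)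
                                    / (\<Sum>k=1..N. w k) \<partial>M))"
proof -
  interpret M: prob_space M by (rule prob)
  define W where "W = (\<Sum>k=1..N. w k)"
  have "W > 0"
    unfolding W_def using w_pos N_pos by (intro sum_pos) auto
  have \<theta>_pos: "\<forall>n\<in>{1..N}. w n / W > 0" and \<theta>_sum: "(\<Sum>n=1..N. w n / W) = 1"
    using w_pos \<open>W > 0\<close> by (auto simp: W_def simp flip: sum_divide_distrib)
  note maxmin = eps_bound[OF \<theta>_pos \<theta>_sum]
  define R where "R \<omega> = regret_w w N Pol (\<lambda>n. ft n \<omega> (pis n \<omega>)) (\<lambda>n. pis n \<omega>)" for \<omega>
  define S where "S \<omega> = (SUP p\<in>{1..N} \<rightarrow>\<^sub>E Pol. INF q\<in>Pol. \<Sum>n=1..N. w n / W * ft n \<omega> (p n) q)" for \<omega>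
  define F where "F n \<omega> = Fcost d act Div pstar (pis n \<omega>) (pis n \<omega>)" for n \<omega>
  define L where "L n \<omega> = ft n \<omega> (pis n \<omega>) (pis n \<omega>)" for n \<omega>
  have unbiased_diag: "integrable M (L n) \<and> integrable M (F n) \<and> (\<integral>\<omega>. L n \<omega> \<partial>M) = (\<integral>\<omega>. F n \<omega> \<partial>M)"
    if n: "n \<in> {1..N}" for n
  proof -
    have "space M \<in> sets (G (n - 1))"
      using filt_sub[of "n - 1"] sets.top[of "G (n - 1)"] by (simp add: subalgebra_def)
    from unbiased[OF _ pis_meas _ this] n pis_Pi show ?thesis
      unfolding L_def F_def by (simp cong: Bochner_Integration.integral_cong)
  qed
  have perf_avg: "(\<Sum>n=1..N. w n * J (pis n \<omega>) / W) \<le> J pstar + C * (\<Sum>n=1..N. w n / W * F n \<omega>)"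
    if \<omega>: "\<omega> \<in> space M" for \<omega>
  proof -
    have "J (pis n \<omega>) \<le> J pstar + C * F n \<omega>" if "n \<in> {1..N}" for n
      using perf[OF pis_Pi[OF _ \<omega>]] that unfolding F_def by force
    then have "(\<Sum>n=1..N. w n / W * J (pis n \<omega>)) \<le> J pstar + (\<Sum>n=1..N. w n / W * (C * F n \<omega>))"
      using \<theta>_pos \<theta>_sum by (intro convex_combination_le_add) (auto intro: less_imp_le)
    then show ?thesis
      by (simp add: sum_distrib_left mult_ac)
  qed
  have regret_avg: "(\<Sum>n=1..N. w n / W * L n \<omega>) \<le> R \<omega> / W + S \<omega>" if "\<omega> \<in> space M" for \<omega>
    unfolding L_def R_def S_def using maxmin that pis_Pi
    by (intro weighted_loss_le_regret_plus_maxmin[OF \<open>W > 0\<close>]) auto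
  have S_int: "integrable M S" and S_le: "(\<integral>\<omega>. S \<omega> \<partial>M) \<le> eps"
    using maxmin unfolding S_def by auto
  have F_int: "integrable M (\<lambda>\<omega>. \<Sum>n=1..N. w n / W * F n \<omega>)"
    using unbiased_diag by auto
  have F_eq_L: "(\<integral>\<omega>. (\<Sum>n=1..N. w n / W * F n \<omega>) \<partial>M) = (\<integral>\<omega>. (\<Sum>n=1..N. w n / W * L n \<omega>) \<partial>M)"
    using unbiased_diag by (simp add: integral_sum)
  have R_int: "integrable M R"
    using regret_int unfolding R_def .
  have "(\<integral>\<omega>. (\<Sum>n=1..N. w n * J (pis n \<omega>) / W) \<partial>M)
      \<le> (\<integral>\<omega>. J pstar + C * (\<Sum>n=1..N. w n / W * F n \<omega>) \<partial>M)"
    using perf_avg J_int F_int by (intro integral_mono) auto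
  also have "\<dots> = J pstar + C * (\<integral>\<omega>. (\<Sum>n=1..N. w n / W * L n \<omega>) \<partial>M)"
    using F_int F_eq_L by (simp add: M.prob_space)
  also have "(\<integral>\<omega>. (\<Sum>n=1..N. w n / W * L n \<omega>) \<partial>M) \<le> (\<integral>\<omega>. R \<omega> / W + S \<omega> \<partial>M)"
    using regret_avg unbiased_diag R_int S_int by (intro integral_mono) auto
  also have "\<dots> \<le> (\<integral>\<omega>. R \<omega> / W \<partial>M) + eps"
    using R_int S_int S_le by simp
  finally show ?thesis
    using C_nonneg unfolding W_def R_def by (simp add: mult_left_mono add.commute)
qed

end
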